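(* Let $\mathcal{V}$ be a subspace of $\mathbb{R}^n$ and let $V$ be a $k\times n$ real matrix whose row space is $\mathcal{V}$. If there is a centered ellipsoid in $\mathbb{R}^k$ passing through all columns of $V$, then for every $k'\times n$ real matrix $\tilde V$ whose row space is $\mathcal{V}$ there is a centered ellipsoid in $\mathbb{R}^{k'}$ passing through all columns of $\tilde V$.
   Context: A centered ellipsoid in $\mathbb{R}^k$ is described by a symmetric positive semidefinite $k\times k$ matrix $M$; it passes through (i.e. has on its boundary) a point $v\in\mathbb{R}^k$ if $v^TMv=1$. *)

theory Defs
  imports "HOL-Analysis.Analysis"
begin

definition centered_ellipsoid :: "real^'k^'k \<Rightarrow> bool" where
  "centered_ellipsoid M \<longleftrightarrow> transpose M = M \<and> (\<forall>x. 0 \<le> x \<bullet> (M *v x))"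

definition passes_through :: "real^'k^'k \<Rightarrow> real^'k \<Rightarrow> bool" where
  "passes_through M v \<longleftrightarrow> v \<bullet> (M *v v) = 1"

end

theory Submission
  imports Defs
begin

text \<open>If the row space of \<open>V\<close> lies in that of \<open>W\<close>, then \<open>V = B ** W\<close> for some matrix \<open>B\<close>, so
  each column of \<open>V\<close> is the image under \<open>B\<close> of the corresponding column of \<open>W\<close>. An ellipsoid
  \<open>M\<close> through the columns of \<open>V\<close> pulls back to \<open>transpose B ** M ** B\<close>, which is again symmetric
  positive semidefinite, and whose quadratic form at \<open>w\<close> is that of \<open>M\<close> at \<open>B w\<close>; so it passes
  through the columns of \<open>W\<close>.\<close>

lemma axis_vector_matrix_mult: "axis i 1 v* A = row i A"
  by (simp add: vec_eq_iff row_def vector_matrix_mult_def axis_def if_distrib[of "\<lambda>c. c * _"] cong: if_cong)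

lemma row_matrix_mul: "row i (A ** B) = row i A v* B"
  by (simp add: vec_eq_iff row_def matrix_matrix_mult_def vector_matrix_mult_def mult.commute)

lemma column_matrix_mul: "column j (A ** B) = A *v column j B"
  by (simp add: vec_eq_iff column_def matrix_matrix_mult_def matrix_vector_mult_def)

lemma span_rows_subset_range_vector_matrix_mult:
  fixes A :: "real^'n^'m"
  shows "span (rows A) \<subseteq> range (\<lambda>x. x v* A)"
proof (rule span_minimal)
  show "rows A \<subseteq> range (\<lambda>x. x v* A)"
    by (auto simp: rows_def axis_vector_matrix_mult[symmetric])
  show "subspace (range (\<lambda>x. x v* A))"
    using linear_subspace_image[OF matrix_vector_mul_linear[of "transpose A"] subspace_UNIV] by simp
qed

lemma span_rows_subset_imp_left_factor:
  fixes A :: "real^'n^'m" and C :: "real^'n^'p"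
  assumes "span (rows A) \<subseteq> span (rows C)"
  obtains B :: "real^'p^'m" where "A = B ** C"
proof -
  have "row i A \<in> rows A" for i
    unfolding rows_def by blast
  then have "row i A \<in> span (rows C)" for i
    using assms span_base by blast
  then have "\<forall>i. \<exists>x. row i A = x v* C"
    using span_rows_subset_range_vector_matrix_mult[of C] by blast
  then obtain b where b: "\<And>i. row i A = b i v* C" by metis
  have "row i A = row i ((\<chi> i. b i) ** C)" for i
    by (simp only: b row_matrix_mul) (simp add: row_def)
  then have "A = (\<chi> i. b i) ** C"
    by (simp add: vec_eq_iff row_def)
  then show ?thesis by (rule that)
qed

lemma quadratic_form_pullback:
  fixes B :: "real^'a^'b" and M :: "real^'b^'b"
  shows "x \<bullet> ((transpose B ** M ** B) *v x) = (B *v x) \<bullet> (M *v (B *v x))"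
proof -
  have "x \<bullet> ((transpose B ** M ** B) *v x) = x \<bullet> ((M *v (B *v x)) v* B)"
    by (simp only: matrix_vector_mul_assoc[symmetric] transpose_matrix_vector)
  also have "\<dots> = (M *v (B *v x)) \<bullet> (B *v x)"
    by (simp only: inner_commute[of x] dot_lmul_matrix)
  finally show ?thesis by (simp add: inner_commute)
qed

lemma centered_ellipsoid_pullback:
  fixes B :: "real^'a^'b"
  assumes "centered_ellipsoid M"
  shows "centered_ellipsoid (transpose B ** M ** B)"
  using assms unfolding centered_ellipsoid_def
  by (simp add: quadratic_form_pullback matrix_transpose_mul matrix_mul_assoc)

lemma passes_through_pullback:
  fixes B :: "real^'a^'b"
  shows "passes_through (transpose B ** M ** B) x \<longleftrightarrow> passes_through M (B *v x)"
  by (simp add: passes_through_def quadratic_form_pullback)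

theorem lemma2p4:
  fixes \<V> :: "(real^'n) set"
    and V :: "real^'n^'k"
    and Vt :: "real^'n^'k2"
  assumes "subspace \<V>"
    and "span (rows V) = \<V>"
    and "span (rows Vt) = \<V>"
    and "\<exists>M::real^'k^'k. centered_ellipsoid M \<and> (\<forall>v\<in>columns V. passes_through M v)"
  shows "\<exists>M::real^'k2^'k2. centered_ellipsoid M \<and> (\<forall>v\<in>columns Vt. passes_through M v)"
proof -
  obtain M :: "real^'k^'k" where M: "centered_ellipsoid M" "\<forall>v\<in>columns V. passes_through M v"
    using assms(4) by blast
  from assms(2,3) have "span (rows V) \<subseteq> span (rows Vt)" by simp
  then obtain B where B: "V = B ** Vt" by (rule span_rows_subset_imp_left_factor)
  have "passes_through (transpose B ** M ** B) v" if "v \<in> columns Vt" for v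
  proof -
    from that obtain j where "v = column j Vt" by (auto simp: columns_def)
    then have "B *v v \<in> columns V" by (auto simp: B column_matrix_mul columns_def)
    then show ?thesis using M(2) by (simp add: passes_through_pullback)
  qed
  then show ?thesis using centered_ellipsoid_pullback[OF M(1)] by blast
qed

end
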